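(* Let $n\ge 3$ and let $S=[A_0,\dots,A_n]$ be an $n$-pre-kite which is not a regular $n$-simplex. Then $S$ has at most two apexes.
   Context: An $n$-simplex is the convex hull of $n+1$ affinely independent points in a Euclidean space; its $j$-th facet $S_j$ is the $(n-1)$-simplex obtained by removing the vertex $A_j$. An $n$-simplex is an $n$-pre-kite if at least one facet $S_j$ is a regular $(n-1)$-simplex (all edges of equal length); the corresponding vertex $A_j$ is called an apex. *)

theory Defs
  imports "HOL-Analysis.Analysis"
begin

definition is_simplex :: "nat \<Rightarrow> (nat \<Rightarrow> 'a::euclidean_space) \<Rightarrow> bool" where
  "is_simplex n A \<longleftrightarrow> inj_on A {0..n} \<and> \<not> affine_dependent (A ` {0..n})"

definition regular_on :: "nat set \<Rightarrow> (nat \<Rightarrow> 'a::euclidean_space) \<Rightarrow> bool" where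
  "regular_on I A \<longleftrightarrow> (\<forall>i\<in>I. \<forall>j\<in>I. \<forall>k\<in>I. \<forall>l\<in>I.
      i \<noteq> j \<longrightarrow> k \<noteq> l \<longrightarrow> dist (A i) (A j) = dist (A k) (A l))"

definition is_apex :: "nat \<Rightarrow> (nat \<Rightarrow> 'a::euclidean_space) \<Rightarrow> nat \<Rightarrow> bool" where
  "is_apex n A j \<longleftrightarrow> j \<in> {0..n} \<and> regular_on ({0..n} - {j}) A"

definition is_pre_kite :: "nat \<Rightarrow> (nat \<Rightarrow> 'a::euclidean_space) \<Rightarrow> bool" where
  "is_pre_kite n A \<longleftrightarrow> is_simplex n A \<and> (\<exists>j. is_apex n A j)"

definition is_regular_simplex :: "nat \<Rightarrow> (nat \<Rightarrow> 'a::euclidean_space) \<Rightarrow> bool" where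
  "is_regular_simplex n A \<longleftrightarrow> is_simplex n A \<and> regular_on {0..n} A"

end

theory Submission
  imports Defs
begin

text \<open>Three regular facets already cover every edge, so any two edges {i,j} and {k,l} lie in
  regular facets S_x and S_y; a third edge {p,q} avoiding both x and y (it exists since the
  simplex has at least four vertices) lies in both facets, whence |A_i A_j| = |A_p A_q| = |A_k A_l|.\<close>

lemma card_Diff_doubleton_ge:
  assumes "finite I"
  shows "card (I - {x, y}) \<ge> card I - 2"
proof -
  have "card (I - {x, y}) \<ge> card I - card {x, y}"
    by (rule diff_card_le_card_Diff) simp
  moreover have "card {x, y} \<le> 2"
    by (simp add: card_insert_le_m1)
  ultimately show ?thesis by linarith
qed

lemma obtain_edge_avoiding:
  assumes "card I \<ge> 4"
  obtains p q where "p \<in> I" "q \<in> I" "p \<noteq> q" "p \<notin> {x, y}" "q \<notin> {x, y}"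
proof -
  have "finite I" using assms by (metis card.infinite not_numeral_le_zero)
  then have "card (I - {x, y}) \<ge> 2"
    using card_Diff_doubleton_ge[of I x y] assms by linarith
  then obtain P where "P \<subseteq> I - {x, y}" "card P = 2"
    by (metis obtain_subset_with_card_n)
  then show ?thesis using that by (auto simp: card_2_iff)
qed

lemma regular_on_if_three_regular_facets:
  assumes "card I \<ge> 4"
    and three: "x1 \<noteq> x2" "x1 \<noteq> x3" "x2 \<noteq> x3"
    and facets: "\<And>x. x \<in> {x1, x2, x3} \<Longrightarrow> regular_on (I - {x}) A"
  shows "regular_on I A"
  unfolding regular_on_def
proof (intro ballI impI)
  fix i j k l assume ijkl: "i \<in> I" "j \<in> I" "k \<in> I" "l \<in> I" "i \<noteq> j" "k \<noteq> l"
  have avoiding: "\<exists>x \<in> {x1, x2, x3}. x \<noteq> u \<and> x \<noteq> v" for u v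
    using three by auto
  obtain x where x: "x \<in> {x1, x2, x3}" "x \<noteq> i" "x \<noteq> j" using avoiding by blast
  obtain y where y: "y \<in> {x1, x2, x3}" "y \<noteq> k" "y \<noteq> l" using avoiding by blast
  obtain p q where pq: "p \<in> I" "q \<in> I" "p \<noteq> q" "p \<notin> {x, y}" "q \<notin> {x, y}"
    using obtain_edge_avoiding[OF assms(1)] by blast
  have "dist (A i) (A j) = dist (A p) (A q)"
    using facets[OF x(1)] x pq ijkl unfolding regular_on_def by auto
  also have "\<dots> = dist (A k) (A l)"
    using facets[OF y(1)] y pq ijkl unfolding regular_on_def by auto
  finally show "dist (A i) (A j) = dist (A k) (A l)" .
qed

theorem lemma5p1:
  fixes A :: "nat \<Rightarrow> 'a::euclidean_space" and n :: nat
  assumes "n \<ge> 3"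
    and "is_pre_kite n A"
    and "\<not> is_regular_simplex n A"
  shows "card {j. is_apex n A j} \<le> 2"
proof (rule ccontr)
  assume "\<not> card {j. is_apex n A j} \<le> 2"
  then obtain X where "X \<subseteq> {j. is_apex n A j}" "card X = 3"
    by (metis obtain_subset_with_card_n not_less_eq_eq numeral_2_eq_2 numeral_3_eq_3)
  then obtain x1 x2 x3 where "x1 \<noteq> x2" "x1 \<noteq> x3" "x2 \<noteq> x3"
      and "\<And>x. x \<in> {x1, x2, x3} \<Longrightarrow> regular_on ({0..n} - {x}) A"
    by (auto simp: card_3_iff is_apex_def)
  moreover have "card {0..n} \<ge> 4" using assms(1) by simp
  ultimately have "regular_on {0..n} A"
    using regular_on_if_three_regular_facets by blast
  then show False
    using assms(2,3) by (simp add: is_regular_simplex_def is_pre_kite_def)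
qed

end
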